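(* Let $(L,\preceq,\bot,\top)$ be a bounded lattice with at least three elements. Every non-empty family of minimal blocks of $L$ in which no block is repeated is a family of independent blocks.
   Context: For $k\in L$ let ${\uparrow}k=\{x\in L\mid k\preceq x\}$ and ${\downarrow}k=\{x\in L\mid x\preceq k\}$. A block of $L$ is a sublattice $K\subsetneq L$ (a proper subset) such that $K\setminus\{\bot,\top\}\neq\varnothing$ and $({\uparrow}k\cup{\downarrow}k)\setminus\{\bot,\top\}\subseteq K$ for every $k\in K\setminus\{\bot,\top\}$. A block $K$ is minimal if there is no block $K'$ of $L$ with $K'\subsetneq K$. Two blocks $K_1,K_2$ are independent if $K_1\cap K_2\subseteq\{\bot,\top\}$; a family of blocks is a family of independent blocks if its members are pairwise independent. *)

theory Defs
  imports Main
begin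

definition up_set :: "'a::bounded_lattice \<Rightarrow> 'a set" where
  "up_set k = {x. k \<le> x}"

definition down_set :: "'a::bounded_lattice \<Rightarrow> 'a set" where
  "down_set k = {x. x \<le> k}"

definition sublattice :: "'a::bounded_lattice set \<Rightarrow> bool" where
  "sublattice K \<longleftrightarrow> (\<forall>x\<in>K. \<forall>y\<in>K. inf x y \<in> K \<and> sup x y \<in> K)"

definition is_block :: "'a::bounded_lattice set \<Rightarrow> bool" where
  "is_block K \<longleftrightarrow> sublattice K \<and> K \<subset> UNIV \<and> K - {bot, top} \<noteq> {}
     \<and> (\<forall>k \<in> K - {bot, top}. (up_set k \<union> down_set k) - {bot, top} \<subseteq> K)"

definition minimal_block :: "'a::bounded_lattice set \<Rightarrow> bool" where
  "minimal_block K \<longleftrightarrow> is_block K \<and> \<not> (\<exists>K'. is_block K' \<and> K' \<subset> K)"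

definition independent_blocks :: "'a::bounded_lattice set \<Rightarrow> 'a set \<Rightarrow> bool" where
  "independent_blocks K1 K2 \<longleftrightarrow> K1 \<inter> K2 \<subseteq> {bot, top}"

definition family_of_independent_blocks :: "'a::bounded_lattice set set \<Rightarrow> bool" where
  "family_of_independent_blocks F \<longleftrightarrow> (\<forall>K\<in>F. is_block K)
     \<and> (\<forall>K1\<in>F. \<forall>K2\<in>F. K1 \<noteq> K2 \<longrightarrow> independent_blocks K1 K2)"

end

theory Submission
  imports Defs
begin

text \<open>Two blocks sharing an element outside \<open>{bot, top}\<close> intersect in a block, so two minimal
  blocks sharing such an element both equal their intersection and coincide.\<close>

lemma is_block_Int:
  assumes "is_block K1" "is_block K2" "k \<in> K1 \<inter> K2" "k \<notin> {bot, top}"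
  shows "is_block (K1 \<inter> K2)"
  using assms unfolding is_block_def sublattice_def by blast

lemma minimal_block_eq_if_common_element:
  assumes "minimal_block K1" "minimal_block K2" "k \<in> K1 \<inter> K2" "k \<notin> {bot, top}"
  shows "K1 = K2"
proof -
  have block_Int: "is_block (K1 \<inter> K2)"
    using assms is_block_Int unfolding minimal_block_def by blast
  have "\<not> K1 \<inter> K2 \<subset> K1" "\<not> K1 \<inter> K2 \<subset> K2"
    using block_Int assms(1,2) unfolding minimal_block_def by blast+
  then show ?thesis by blast
qed

lemma distinct_minimal_blocks_independent:
  assumes "minimal_block K1" "minimal_block K2" "K1 \<noteq> K2"
  shows "independent_blocks K1 K2"
  using assms minimal_block_eq_if_common_element unfolding independent_blocks_def by blast

theorem proposition20:
  fixes F :: "'a::bounded_lattice set set"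
  assumes three: "\<exists>a b c :: 'a. a \<noteq> b \<and> a \<noteq> c \<and> b \<noteq> c"
    and nonempty: "F \<noteq> {}"
    and minimal: "\<forall>K\<in>F. minimal_block K"
  shows "family_of_independent_blocks F"
  unfolding family_of_independent_blocks_def
proof (intro conjI ballI impI)
  show "is_block K" if "K \<in> F" for K
    using that minimal unfolding minimal_block_def by blast
  show "independent_blocks K1 K2" if "K1 \<in> F" "K2 \<in> F" "K1 \<noteq> K2" for K1 K2
    using that minimal distinct_minimal_blocks_independent by blast
qed

end
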